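(* For $D=(\mu,\mathcal{A},\mathcal{B},\mathcal{F})\in\mathcal{BV}(\Omega)$ define the pseudo-analytic mass $\mathcal{M}(D):=\int_\Omega\frac{|\mathcal{B}|^2}{1-|\mu|^2}\,dx\,dy\in[0,\infty]$. If $D_1\sim D_2$ (gauge-diffeomorphism equivalence), then $\mathcal{M}(D_1)=\mathcal{M}(D_2)$.
   Context: A domain is an open connected subset of $\mathbb{C}$, $z=x+iy$. $\mathcal{BV}(\Omega)$ is the set of quadruples $(\mu,\mathcal{A},\mathcal{B},\mathcal{F})$ of continuous complex functions on $\Omega$ with $|\mu|<1$ pointwise. Gauge action: for a $C^1$ nowhere-vanishing $\phi$ on $\Omega$, $\phi\cdot(\mu,\mathcal{A},\mathcal{B},\mathcal{F})=(\mu,\ \mathcal{A}-\phi_{\bar z}/\phi+\mu\phi_z/\phi,\ \mathcal{B}\phi/\bar\phi,\ \phi\mathcal{F})$; $D_1\sim_g D_2$ iff $\phi\cdot D_1=D_2$ for some such $\phi$. Diffeomorphism: $C^1$ bijection $\Phi:\Omega_1\to\Omega_2$ with $C^1$ inverse and $J=|\Phi_z|^2-|\Phi_{\bar z}|^2>0$; for $D\in\mathcal{BV}(\Omega_2)$, with $K=\Phi_z+(\mu\circ\Phi)\overline{\Phi_{\bar z}}$, $\Phi^*D=((\Phi_{\bar z}+(\mu\circ\Phi)\overline{\Phi_z})/K,\ J(\mathcal{A}\circ\Phi)/K,\ J(\mathcal{B}\circ\Phi)/K,\ J(\mathcal{F}\circ\Phi)/K)$; $D_1\sim_d D_2$ iff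 $D_1=\Phi^*D_2$ for some diffeomorphism $\Phi$. The relation $\sim$ is the equivalence relation generated by $\sim_g$ and $\sim_d$ (finite chains of such steps), on the disjoint union of all $\mathcal{BV}(\Omega)$. *)

theory Defs
  imports "HOL-Analysis.Analysis"
begin

definition is_domain :: "complex set \<Rightarrow> bool" where
  "is_domain \<Omega> \<longleftrightarrow> open \<Omega> \<and> connected \<Omega> \<and> \<Omega> \<noteq> {}"

definition pdx :: "(complex \<Rightarrow> complex) \<Rightarrow> complex \<Rightarrow> complex" where
  "pdx f z = frechet_derivative f (at z) 1"
definition pdy :: "(complex \<Rightarrow> complex) \<Rightarrow> complex \<Rightarrow> complex" where
  "pdy f z = frechet_derivative f (at z) \<i>"
definition dz :: "(complex \<Rightarrow> complex) \<Rightarrow> complex \<Rightarrow> complex" where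
  "dz f z = (pdx f z - \<i> * pdy f z) / 2"
definition dzb :: "(complex \<Rightarrow> complex) \<Rightarrow> complex \<Rightarrow> complex" where
  "dzb f z = (pdx f z + \<i> * pdy f z) / 2"

definition C1_on :: "complex set \<Rightarrow> (complex \<Rightarrow> complex) \<Rightarrow> bool" where
  "C1_on \<Omega> f \<longleftrightarrow> f differentiable_on \<Omega> \<and>
     continuous_on \<Omega> (pdx f) \<and> continuous_on \<Omega> (pdy f)"

text \<open>Quadruples (mu, A, B, F) of complex functions; only values on the domain matter.\<close>
type_synonym quad = "(complex \<Rightarrow> complex) \<times> (complex \<Rightarrow> complex) \<times>
                     (complex \<Rightarrow> complex) \<times> (complex \<Rightarrow> complex)"

definition BV :: "complex set \<Rightarrow> quad \<Rightarrow> bool" where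
  "BV \<Omega> D \<longleftrightarrow> (case D of (\<mu>, A, B, F) \<Rightarrow>
     continuous_on \<Omega> \<mu> \<and> continuous_on \<Omega> A \<and> continuous_on \<Omega> B \<and> continuous_on \<Omega> F \<and>
     (\<forall>z\<in>\<Omega>. cmod (\<mu> z) < 1))"

definition gauge_act :: "(complex \<Rightarrow> complex) \<Rightarrow> quad \<Rightarrow> quad" where
  "gauge_act \<phi> D = (case D of (\<mu>, A, B, F) \<Rightarrow>
     (\<mu>,
      (\<lambda>z. A z - dzb \<phi> z / \<phi> z + \<mu> z * dz \<phi> z / \<phi> z),
      (\<lambda>z. B z * \<phi> z / cnj (\<phi> z)),
      (\<lambda>z. \<phi> z * F z)))"

definition jac :: "(complex \<Rightarrow> complex) \<Rightarrow> complex \<Rightarrow> real" where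
  "jac \<Phi> z = (cmod (dz \<Phi> z))\<^sup>2 - (cmod (dzb \<Phi> z))\<^sup>2"

definition pullback :: "(complex \<Rightarrow> complex) \<Rightarrow> quad \<Rightarrow> quad" where
  "pullback \<Phi> D = (case D of (\<mu>, A, B, F) \<Rightarrow>
     (let K = (\<lambda>z. dz \<Phi> z + \<mu> (\<Phi> z) * cnj (dzb \<Phi> z)) in
     ((\<lambda>z. (dzb \<Phi> z + \<mu> (\<Phi> z) * cnj (dz \<Phi> z)) / K z),
      (\<lambda>z. of_real (jac \<Phi> z) * A (\<Phi> z) / K z),
      (\<lambda>z. of_real (jac \<Phi> z) * B (\<Phi> z) / K z),
      (\<lambda>z. of_real (jac \<Phi> z) * F (\<Phi> z) / K z))))"

definition diffeo :: "complex set \<Rightarrow> complex set \<Rightarrow> (complex \<Rightarrow> complex) \<Rightarrow> bool" where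
  "diffeo \<Omega>1 \<Omega>2 \<Phi> \<longleftrightarrow> bij_betw \<Phi> \<Omega>1 \<Omega>2 \<and> C1_on \<Omega>1 \<Phi> \<and>
     (\<exists>\<Psi>. C1_on \<Omega>2 \<Psi> \<and> (\<forall>w\<in>\<Omega>2. \<Psi> w \<in> \<Omega>1 \<and> \<Phi> (\<Psi> w) = w) \<and>
          (\<forall>z\<in>\<Omega>1. \<Psi> (\<Phi> z) = z)) \<and>
     (\<forall>z\<in>\<Omega>1. jac \<Phi> z > 0)"

definition quad_eq_on :: "complex set \<Rightarrow> quad \<Rightarrow> quad \<Rightarrow> bool" where
  "quad_eq_on \<Omega> D E \<longleftrightarrow> (\<forall>z\<in>\<Omega>.
     fst D z = fst E z \<and> fst (snd D) z = fst (snd E) z \<and>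
     fst (snd (snd D)) z = fst (snd (snd E)) z \<and> snd (snd (snd D)) z = snd (snd (snd E)) z)"

text \<open>Elements of the disjoint union of all BV(Omega): pairs (Omega, D).\<close>
definition gauge_rel :: "complex set \<times> quad \<Rightarrow> complex set \<times> quad \<Rightarrow> bool" where
  "gauge_rel X Y \<longleftrightarrow> (case X of (\<Omega>1, D1) \<Rightarrow> case Y of (\<Omega>2, D2) \<Rightarrow>
     is_domain \<Omega>1 \<and> \<Omega>1 = \<Omega>2 \<and> BV \<Omega>1 D1 \<and> BV \<Omega>2 D2 \<and>
     (\<exists>\<phi>. C1_on \<Omega>1 \<phi> \<and> (\<forall>z\<in>\<Omega>1. \<phi> z \<noteq> 0) \<and> quad_eq_on \<Omega>1 (gauge_act \<phi> D1) D2))"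

definition diffeo_rel :: "complex set \<times> quad \<Rightarrow> complex set \<times> quad \<Rightarrow> bool" where
  "diffeo_rel X Y \<longleftrightarrow> (case X of (\<Omega>1, D1) \<Rightarrow> case Y of (\<Omega>2, D2) \<Rightarrow>
     is_domain \<Omega>1 \<and> is_domain \<Omega>2 \<and> BV \<Omega>1 D1 \<and> BV \<Omega>2 D2 \<and>
     (\<exists>\<Phi>. diffeo \<Omega>1 \<Omega>2 \<Phi> \<and> quad_eq_on \<Omega>1 D1 (pullback \<Phi> D2)))"

definition bv_equiv :: "complex set \<times> quad \<Rightarrow> complex set \<times> quad \<Rightarrow> bool" where
  "bv_equiv = equivclp (\<lambda>X Y. gauge_rel X Y \<or> diffeo_rel X Y)"

definition mass :: "complex set \<Rightarrow> quad \<Rightarrow> ennreal" where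
  "mass \<Omega> D = (case D of (\<mu>, A, B, F) \<Rightarrow>
     (\<integral>\<^sup>+ z. ennreal (indicator \<Omega> z * ((cmod (B z))\<^sup>2 / (1 - (cmod (\<mu> z))\<^sup>2))) \<partial>lebesgue))"

end

theory Submission
  imports Defs
begin

text \<open>Under a gauge change B is multiplied by the unimodular factor phi / cnj phi, so the
  density |B|^2 / (1 - |mu|^2) is unchanged pointwise. For a pullback by Phi, with
  K = Phi_z + mu cnj Phi_zbar and N = Phi_zbar + mu cnj Phi_z, the identity
  |K|^2 - |N|^2 = J (1 - |mu|^2) makes the pulled-back density equal to J times the density
  composed with Phi, and the change of variables formula equates the two integrals.\<close>

lemma equivclp_invariant:
  assumes "equivclp r x y" and "\<And>a b. r a b \<Longrightarrow> f a = f b"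
  shows "f x = f y"
  using assms(1) by (induction rule: equivclp_induct) (metis assms(2))+

lemma frechet_derivative_left_inverse:
  assumes "open S" "z \<in> S" "f differentiable (at z)" "g differentiable (at (f z))"
    and "\<And>x. x \<in> S \<Longrightarrow> g (f x) = x"
  shows "frechet_derivative g (at (f z)) \<circ> frechet_derivative f (at z) = id"
proof -
  have "((g \<circ> f) has_derivative (frechet_derivative g (at (f z)) \<circ> frechet_derivative f (at z))) (at z)"
    using assms(3,4) by (intro diff_chain_at) (simp_all add: frechet_derivative_works[symmetric])
  then have "(id has_derivative (frechet_derivative g (at (f z)) \<circ> frechet_derivative f (at z))) (at z)"
    by (rule has_derivative_transform_within_open[OF _ assms(1,2)]) (simp add: assms(5))
  then show ?thesis
    by (rule has_derivative_unique[OF _ has_derivative_id])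
qed

lemma nn_integral_lebesgue_eq_if_has_integral_iff:
  fixes f g :: "'a::euclidean_space \<Rightarrow> real"
  assumes f: "f \<in> borel_measurable lebesgue" "\<And>x. 0 \<le> f x"
    and g: "g \<in> borel_measurable lebesgue" "\<And>x. 0 \<le> g x"
    and has_integral_iff: "\<And>r. (f has_integral r) UNIV \<longleftrightarrow> (g has_integral r) UNIV"
  shows "(\<integral>\<^sup>+x. ennreal (f x) \<partial>lebesgue) = (\<integral>\<^sup>+x. ennreal (g x) \<partial>lebesgue)"
proof -
  have finite_iff: "(\<integral>\<^sup>+x. ennreal (f x) \<partial>lebesgue) = ennreal r
      \<longleftrightarrow> (\<integral>\<^sup>+x. ennreal (g x) \<partial>lebesgue) = ennreal r" if "0 \<le> r" for r
    using has_integral_iff[of r] that f g by (simp add: has_integral_iff_nn_integral_lebesgue)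
  show ?thesis
  proof (cases "\<integral>\<^sup>+x. ennreal (f x) \<partial>lebesgue")
    case (real r)
    then show ?thesis using finite_iff by simp
  next
    case top
    then show ?thesis using finite_iff by (cases "\<integral>\<^sup>+x. ennreal (g x) \<partial>lebesgue") auto
  qed
qed

section \<open>The complex plane as \<open>real^2\<close>\<close>

text \<open>The change of variables theorems of HOL-Analysis are stated for \<open>real^'n\<close>; integrals
  over \<open>\<complex>\<close> are transported to \<open>real^2\<close> along this measure-preserving isometry.\<close>

definition complex_of_vec :: "real^2 \<Rightarrow> complex" where
  "complex_of_vec x = Complex (x$1) (x$2)"

definition vec_of_complex :: "complex \<Rightarrow> real^2" where
  "vec_of_complex z = vector [Re z, Im z]"

lemma complex_of_vec_vec_of_complex [simp]: "complex_of_vec (vec_of_complex z) = z"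
  by (simp add: complex_of_vec_def vec_of_complex_def)

lemma vec_of_complex_complex_of_vec [simp]: "vec_of_complex (complex_of_vec x) = x"
  by (simp add: complex_of_vec_def vec_of_complex_def vec_eq_iff forall_2)

lemma complex_of_vec_axis [simp]:
  "complex_of_vec (axis 1 1) = 1" "complex_of_vec (axis 2 1) = \<i>"
  by (simp_all add: complex_of_vec_def axis_def complex_eq_iff)

lemma bounded_linear_complex_of_vec: "bounded_linear complex_of_vec"
  by (rule bounded_linearI') (auto simp: complex_of_vec_def complex_eq_iff)

lemma bounded_linear_vec_of_complex: "bounded_linear vec_of_complex"
  by (rule bounded_linearI') (auto simp: vec_of_complex_def vec_eq_iff forall_2)

lemma borel_measurable_complex_of_vec [measurable]: "complex_of_vec \<in> borel_measurable borel"
  by (intro borel_measurable_continuous_onI linear_continuous_on bounded_linear_complex_of_vec)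

lemma lborel_distr_complex_of_vec: "distr lborel borel complex_of_vec = lborel"
proof (rule lborel_eqI[symmetric])
  fix l u :: complex
  assume le_Basis: "\<And>b. b \<in> Basis \<Longrightarrow> l \<bullet> b \<le> u \<bullet> b"
  have le: "Re l \<le> Re u" "Im l \<le> Im u"
    using le_Basis[of 1] le_Basis[of \<i>] by (auto simp: Basis_complex_def)
  have "complex_of_vec -` box l u = box (vec_of_complex l) (vec_of_complex u)"
    by (auto simp: mem_box_cart mem_box Basis_complex_def complex_of_vec_def vec_of_complex_def
        forall_2)
  then have "emeasure (distr lborel borel complex_of_vec) (box l u)
      = emeasure lborel (box (vec_of_complex l) (vec_of_complex u))"
    by (simp add: emeasure_distr)
  also have "\<dots> = ennreal ((Re u - Re l) * (Im u - Im l))"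
    using le by (simp add: emeasure_lborel_box_eq Basis_vec_def UNIV_2 axis_eq_axis inner_axis
        vec_of_complex_def cart_eq_inner_axis[symmetric] ennreal_mult[symmetric])
  finally show "emeasure (distr lborel borel complex_of_vec) (box l u) = (\<Prod>b\<in>Basis. (u - l) \<bullet> b)"
    by (simp add: Basis_complex_def inner_complex_def)
qed simp

lemma nn_integral_lebesgue_complex_of_vec:
  fixes f :: "complex \<Rightarrow> real"
  assumes "f \<in> borel_measurable borel"
  shows "(\<integral>\<^sup>+x. ennreal (f (complex_of_vec x)) \<partial>lebesgue) = (\<integral>\<^sup>+z. ennreal (f z) \<partial>lebesgue)"
proof -
  have "(\<integral>\<^sup>+x. ennreal (f (complex_of_vec x)) \<partial>lebesgue)
      = (\<integral>\<^sup>+x. ennreal (f (complex_of_vec x)) \<partial>lborel)"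
    using assms by (simp add: nn_integral_completion)
  also have "\<dots> = (\<integral>\<^sup>+z. ennreal (f z) \<partial>distr lborel borel complex_of_vec)"
    using assms by (simp add: nn_integral_distr)
  also have "\<dots> = (\<integral>\<^sup>+z. ennreal (f z) \<partial>lebesgue)"
    using assms by (simp add: lborel_distr_complex_of_vec nn_integral_completion)
  finally show ?thesis .
qed

lemma has_derivative_in_coordinates:
  assumes "f differentiable (at (complex_of_vec x))"
  shows "((vec_of_complex \<circ> f \<circ> complex_of_vec) has_derivative
          (vec_of_complex \<circ> frechet_derivative f (at (complex_of_vec x)) \<circ> complex_of_vec))
         (at x within A)"
proof -
  have "((f \<circ> complex_of_vec) has_derivative
          (frechet_derivative f (at (complex_of_vec x)) \<circ> complex_of_vec)) (at x)"
    using bounded_linear_complex_of_vec assms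
    by (intro diff_chain_at bounded_linear_imp_has_derivative)
      (simp_all add: frechet_derivative_works)
  then have "((vec_of_complex \<circ> (f \<circ> complex_of_vec)) has_derivative
      (vec_of_complex \<circ> (frechet_derivative f (at (complex_of_vec x)) \<circ> complex_of_vec))) (at x)"
    by (rule diff_chain_at[OF _ bounded_linear_imp_has_derivative[OF bounded_linear_vec_of_complex]])
  then show ?thesis
    by (simp add: o_assoc has_derivative_at_withinI)
qed

lemma jac_eq_det_matrix:
  "jac \<Phi> z = det (matrix (vec_of_complex \<circ> frechet_derivative \<Phi> (at z) \<circ> complex_of_vec))"
proof -
  let ?L = "frechet_derivative \<Phi> (at z)"
  have "jac \<Phi> z = Re (?L 1) * Im (?L \<i>) - Re (?L \<i>) * Im (?L 1)"
    unfolding jac_def dz_def dzb_def pdx_def pdy_def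
    by (simp add: norm_divide power_divide cmod_power2) (simp add: power2_eq_square field_simps)
  also have "\<dots> = det (matrix (vec_of_complex \<circ> ?L \<circ> complex_of_vec))"
    by (simp add: det_2 matrix_def vec_of_complex_def)
  finally show ?thesis .
qed

lemma continuous_on_jac: "C1_on S \<Phi> \<Longrightarrow> continuous_on S (jac \<Phi>)"
  unfolding C1_on_def jac_def dz_def dzb_def by (auto intro!: continuous_intros)

section \<open>Change of variables in the plane\<close>

lemma has_integral_change_of_variables_complex:
  fixes g :: "complex \<Rightarrow> real"
  assumes "open S"
    and \<Phi>_differentiable: "\<And>z. z \<in> S \<Longrightarrow> \<Phi> differentiable (at z)"
    and \<Psi>_differentiable: "\<And>w. w \<in> T \<Longrightarrow> \<Psi> differentiable (at w)"
    and \<Psi>\<Phi>: "\<And>z. z \<in> S \<Longrightarrow> \<Phi> z \<in> T \<and> \<Psi> (\<Phi> z) = z"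
    and \<Phi>\<Psi>: "\<And>w. w \<in> T \<Longrightarrow> \<Psi> w \<in> S \<and> \<Phi> (\<Psi> w) = w"
    and g_nonneg: "\<And>w. w \<in> T \<Longrightarrow> 0 \<le> g w"
  shows "((\<lambda>x. indicator S (complex_of_vec x) *
             (\<bar>jac \<Phi> (complex_of_vec x)\<bar> * g (\<Phi> (complex_of_vec x)))) has_integral r) UNIV
    \<longleftrightarrow> ((\<lambda>x. indicator T (complex_of_vec x) * g (complex_of_vec x)) has_integral r) UNIV"
proof -
  define D\<Phi> where
    "D\<Phi> x = vec_of_complex \<circ> frechet_derivative \<Phi> (at (complex_of_vec x)) \<circ> complex_of_vec" for x
  define D\<Psi> where
    "D\<Psi> y = vec_of_complex \<circ> frechet_derivative \<Psi> (at (complex_of_vec y)) \<circ> complex_of_vec" for y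
  let ?S = "complex_of_vec -` S" and ?T = "complex_of_vec -` T"
  let ?\<Phi> = "vec_of_complex \<circ> \<Phi> \<circ> complex_of_vec" and ?\<Psi> = "vec_of_complex \<circ> \<Psi> \<circ> complex_of_vec"
  have \<Phi>_derivative: "(?\<Phi> has_derivative D\<Phi> x) (at x within ?S)" if "x \<in> ?S" for x
    using \<Phi>_differentiable that unfolding D\<Phi>_def by (intro has_derivative_in_coordinates) simp
  have \<Psi>_derivative: "(?\<Psi> has_derivative D\<Psi> y) (at y within ?T)" if "y \<in> ?T" for y
    using \<Psi>_differentiable that unfolding D\<Psi>_def by (intro has_derivative_in_coordinates) simp
  have derivative_inverse: "D\<Psi> y \<circ> D\<Phi> (?\<Psi> y) = id" if "y \<in> ?T" for y
  proof -
    let ?z = "\<Psi> (complex_of_vec y)"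
    have z: "?z \<in> S" "\<Phi> ?z = complex_of_vec y"
      using \<Phi>\<Psi> that by auto
    have "frechet_derivative \<Psi> (at (\<Phi> ?z)) \<circ> frechet_derivative \<Phi> (at ?z) = id"
      using z \<Psi>\<Phi> that
      by (intro frechet_derivative_left_inverse[OF \<open>open S\<close>] \<Phi>_differentiable \<Psi>_differentiable) auto
    with z show ?thesis
      by (simp add: D\<Psi>_def D\<Phi>_def fun_eq_iff)
  qed
  have cov: "((\<lambda>x. \<bar>det (matrix (D\<Phi> x))\<bar> * (g \<circ> complex_of_vec) (?\<Phi> x)) has_integral r) ?S
      \<longleftrightarrow> ((g \<circ> complex_of_vec) has_integral r) ?T"
    by (rule cov_invertible_nonneg_eq[OF \<Phi>_derivative \<Psi>_derivative])
      (use \<Psi>\<Phi> \<Phi>\<Psi> g_nonneg derivative_inverse in auto)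
  have "(\<lambda>x. indicator S (complex_of_vec x) *
             (\<bar>jac \<Phi> (complex_of_vec x)\<bar> * g (\<Phi> (complex_of_vec x))))
      = (\<lambda>x. if x \<in> ?S then \<bar>det (matrix (D\<Phi> x))\<bar> * (g \<circ> complex_of_vec) (?\<Phi> x) else 0)"
    by (auto simp: fun_eq_iff D\<Phi>_def jac_eq_det_matrix)
  moreover have "(\<lambda>x. indicator T (complex_of_vec x) * g (complex_of_vec x))
      = (\<lambda>x. if x \<in> ?T then (g \<circ> complex_of_vec) x else 0)"
    by auto
  ultimately show ?thesis
    using cov by (simp only: has_integral_restrict_UNIV)
qed

lemma diffeoE:
  assumes "diffeo S T \<Phi>" "open S" "open T"
  obtains \<Psi> where "C1_on S \<Phi>"
    and "\<And>z. z \<in> S \<Longrightarrow> \<Phi> differentiable (at z)" "\<And>w. w \<in> T \<Longrightarrow> \<Psi> differentiable (at w)"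
    and "\<And>z. z \<in> S \<Longrightarrow> \<Phi> z \<in> T \<and> \<Psi> (\<Phi> z) = z"
    and "\<And>w. w \<in> T \<Longrightarrow> \<Psi> w \<in> S \<and> \<Phi> (\<Psi> w) = w"
    and "\<And>z. z \<in> S \<Longrightarrow> 0 < jac \<Phi> z"
proof -
  from assms(1) obtain \<Psi> where "bij_betw \<Phi> S T" "C1_on S \<Phi>" "C1_on T \<Psi>"
    "\<And>w. w \<in> T \<Longrightarrow> \<Psi> w \<in> S \<and> \<Phi> (\<Psi> w) = w" "\<And>z. z \<in> S \<Longrightarrow> \<Psi> (\<Phi> z) = z"
    "\<And>z. z \<in> S \<Longrightarrow> 0 < jac \<Phi> z"
    unfolding diffeo_def by blast
  with assms(2,3) show ?thesis
    by (intro that) (auto simp: bij_betw_def C1_on_def differentiable_on_eq_differentiable_at)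
qed

lemma borel_measurable_indicator_mult_continuous_on:
  fixes f :: "'a::topological_space \<Rightarrow> real"
  assumes "open S" "continuous_on S f"
  shows "(\<lambda>z. indicator S z * f z) \<in> borel_measurable borel"
  using borel_measurable_continuous_on_indicator[OF borel_open[OF assms(1)] assms(2)] by simp

lemma nn_integral_diffeo:
  fixes g :: "complex \<Rightarrow> real"
  assumes "open S" "open T" and "diffeo S T \<Phi>"
    and g_continuous: "continuous_on T g" and g_nonneg: "\<And>w. w \<in> T \<Longrightarrow> 0 \<le> g w"
  shows "(\<integral>\<^sup>+z. ennreal (indicator S z * (jac \<Phi> z * g (\<Phi> z))) \<partial>lebesgue)
    = (\<integral>\<^sup>+w. ennreal (indicator T w * g w) \<partial>lebesgue)"
proof -
  obtain \<Psi> where "C1_on S \<Phi>"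
    and \<Phi>_differentiable: "\<And>z. z \<in> S \<Longrightarrow> \<Phi> differentiable (at z)"
    and \<Psi>_differentiable: "\<And>w. w \<in> T \<Longrightarrow> \<Psi> differentiable (at w)"
    and \<Psi>\<Phi>: "\<And>z. z \<in> S \<Longrightarrow> \<Phi> z \<in> T \<and> \<Psi> (\<Phi> z) = z"
    and \<Phi>\<Psi>: "\<And>w. w \<in> T \<Longrightarrow> \<Psi> w \<in> S \<and> \<Phi> (\<Psi> w) = w"
    and jac_pos: "\<And>z. z \<in> S \<Longrightarrow> 0 < jac \<Phi> z"
    using diffeoE[OF \<open>diffeo S T \<Phi>\<close> \<open>open S\<close> \<open>open T\<close>] by blast
  define f where "f z = indicator S z * (jac \<Phi> z * g (\<Phi> z))" for z
  define h where "h w = indicator T w * g w" for w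
  have "continuous_on S (\<lambda>z. g (\<Phi> z))"
    using \<open>C1_on S \<Phi>\<close> \<Psi>\<Phi> unfolding C1_on_def
    by (intro continuous_on_compose2[OF g_continuous] differentiable_imp_continuous_on) auto
  then have f_borel: "f \<in> borel_measurable borel"
    unfolding f_def[abs_def] using continuous_on_jac[OF \<open>C1_on S \<Phi>\<close>]
    by (intro borel_measurable_indicator_mult_continuous_on \<open>open S\<close> continuous_on_mult)
  have h_borel: "h \<in> borel_measurable borel"
    unfolding h_def[abs_def]
    by (rule borel_measurable_indicator_mult_continuous_on[OF \<open>open T\<close> g_continuous])
  have "(\<integral>\<^sup>+x. ennreal (f (complex_of_vec x)) \<partial>lebesgue)
      = (\<integral>\<^sup>+x. ennreal (h (complex_of_vec x)) \<partial>lebesgue)"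
  proof (rule nn_integral_lebesgue_eq_if_has_integral_iff)
    show "(\<lambda>x. f (complex_of_vec x)) \<in> borel_measurable lebesgue"
      "(\<lambda>x. h (complex_of_vec x)) \<in> borel_measurable lebesgue"
      using f_borel h_borel by (auto intro: measurable_completion)
    show "0 \<le> f (complex_of_vec x)" for x
    proof (cases "complex_of_vec x \<in> S")
      case True
      then show ?thesis
        using jac_pos[OF True] \<Psi>\<Phi>[OF True] g_nonneg by (simp add: f_def)
    qed (simp add: f_def)
    show "0 \<le> h (complex_of_vec x)" for x
      using g_nonneg by (simp add: h_def indicator_def)
    have "f = (\<lambda>z. indicator S z * (\<bar>jac \<Phi> z\<bar> * g (\<Phi> z)))"
      using jac_pos by (auto simp: fun_eq_iff f_def indicator_def abs_of_pos)
    then show "((\<lambda>x. f (complex_of_vec x)) has_integral r) UNIV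
      \<longleftrightarrow> ((\<lambda>x. h (complex_of_vec x)) has_integral r) UNIV" for r
      unfolding h_def
      using has_integral_change_of_variables_complex[OF \<open>open S\<close> \<Phi>_differentiable \<Psi>_differentiable
          \<Psi>\<Phi> \<Phi>\<Psi> g_nonneg] by simp
  qed
  then show ?thesis
    unfolding nn_integral_lebesgue_complex_of_vec[OF f_borel]
      nn_integral_lebesgue_complex_of_vec[OF h_borel]
    by (simp add: f_def h_def)
qed

section \<open>Invariance of the mass\<close>

definition mass_density :: "complex \<Rightarrow> complex \<Rightarrow> real" where
  "mass_density m b = (cmod b)\<^sup>2 / (1 - (cmod m)\<^sup>2)"

lemma mass_eq_nn_integral_mass_density:
  "mass \<Omega> (\<mu>, A, B, F) = (\<integral>\<^sup>+z. ennreal (indicator \<Omega> z * mass_density (\<mu> z) (B z)) \<partial>lebesgue)"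
  by (simp add: mass_def mass_density_def)

lemma mass_density_nonneg:
  assumes "cmod m < 1"
  shows "0 \<le> mass_density m b"
proof -
  have "(cmod m)\<^sup>2 < 1"
    using assms by (simp add: abs_square_less_1)
  then show ?thesis
    by (simp add: mass_density_def)
qed

lemma continuous_on_mass_density:
  assumes "continuous_on S \<mu>" "continuous_on S B" "\<And>z. z \<in> S \<Longrightarrow> cmod (\<mu> z) < 1"
  shows "continuous_on S (\<lambda>z. mass_density (\<mu> z) (B z))"
proof -
  have "1 - (cmod (\<mu> z))\<^sup>2 \<noteq> 0" if "z \<in> S" for z
  proof -
    have "(cmod (\<mu> z))\<^sup>2 < 1"
      using assms(3)[OF that] by (simp add: abs_square_less_1)
    then show ?thesis
      by linarith
  qed
  with assms(1,2) show ?thesis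
    unfolding mass_density_def by (intro continuous_intros) blast+
qed

lemma mass_density_gauge:
  assumes "\<phi> \<noteq> 0"
  shows "mass_density m (b * \<phi> / cnj \<phi>) = mass_density m b"
  using assms by (simp add: mass_density_def norm_mult norm_divide)

lemma cmod_add_mult_cnj_sq_diff:
  fixes a b m :: complex
  shows "(cmod (a + m * cnj b))\<^sup>2 - (cmod (b + m * cnj a))\<^sup>2 = ((cmod a)\<^sup>2 - (cmod b)\<^sup>2) * (1 - (cmod m)\<^sup>2)"
  unfolding cmod_power2 by (simp add: power2_eq_square algebra_simps)

lemma mass_density_pullback:
  fixes a b m c :: complex
  defines "J \<equiv> (cmod a)\<^sup>2 - (cmod b)\<^sup>2"
  assumes "0 < J" "cmod m < 1"
  shows "mass_density ((b + m * cnj a) / (a + m * cnj b)) (of_real J * c / (a + m * cnj b))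
    = J * mass_density m c"
proof -
  define K where "K = a + m * cnj b"
  define N where "N = b + m * cnj a"
  have m: "0 < 1 - (cmod m)\<^sup>2"
    using assms(3) by (simp add: abs_square_less_1)
  have KN: "(cmod K)\<^sup>2 - (cmod N)\<^sup>2 = J * (1 - (cmod m)\<^sup>2)"
    unfolding K_def N_def J_def by (rule cmod_add_mult_cnj_sq_diff)
  with \<open>0 < J\<close> m have K: "0 < (cmod K)\<^sup>2"
    by (smt (verit) mult_pos_pos zero_le_power2)
  have "mass_density (N / K) (of_real J * c / K)
      = (J\<^sup>2 * (cmod c)\<^sup>2 / (cmod K)\<^sup>2) / (1 - (cmod N)\<^sup>2 / (cmod K)\<^sup>2)"
    by (simp add: mass_density_def norm_divide norm_mult power_divide power_mult_distrib)
  also have "\<dots> = J\<^sup>2 * (cmod c)\<^sup>2 / ((cmod K)\<^sup>2 - (cmod N)\<^sup>2)"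
    using K by (simp add: field_simps)
  also have "\<dots> = J * mass_density m c"
    unfolding KN mass_density_def using \<open>0 < J\<close> by (simp add: power2_eq_square)
  finally show ?thesis
    by (simp add: K_def N_def)
qed

lemma mass_gauge_rel:
  assumes "gauge_rel (\<Omega>1, D1) (\<Omega>2, D2)"
  shows "mass \<Omega>1 D1 = mass \<Omega>2 D2"
proof -
  obtain \<mu> A B F where D1: "D1 = (\<mu>, A, B, F)"
    by (cases D1) auto
  obtain \<mu>' A' B' F' where D2: "D2 = (\<mu>', A', B', F')"
    by (cases D2) auto
  from assms obtain \<phi> where "\<Omega>1 = \<Omega>2" and \<phi>_nonzero: "\<forall>z\<in>\<Omega>1. \<phi> z \<noteq> 0"
    and "quad_eq_on \<Omega>1 (gauge_act \<phi> D1) D2"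
    by (auto simp: gauge_rel_def)
  then have "\<mu>' z = \<mu> z" "B' z = B z * \<phi> z / cnj (\<phi> z)" if "z \<in> \<Omega>1" for z
    using that by (auto simp: quad_eq_on_def gauge_act_def D1 D2)
  with \<phi>_nonzero have density_eq: "indicator \<Omega>1 z * mass_density (\<mu> z) (B z)
      = indicator \<Omega>1 z * mass_density (\<mu>' z) (B' z)" for z
    by (cases "z \<in> \<Omega>1") (simp_all add: mass_density_gauge)
  show ?thesis
    by (simp only: D1 D2 mass_eq_nn_integral_mass_density density_eq \<open>\<Omega>1 = \<Omega>2\<close>[symmetric])
qed

lemma mass_diffeo_rel:
  assumes "diffeo_rel (\<Omega>1, D1) (\<Omega>2, D2)"
  shows "mass \<Omega>1 D1 = mass \<Omega>2 D2"
proof -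
  obtain \<mu> A B F where D1: "D1 = (\<mu>, A, B, F)"
    by (cases D1) auto
  obtain \<mu>' A' B' F' where D2: "D2 = (\<mu>', A', B', F')"
    by (cases D2) auto
  from assms obtain \<Phi> where "open \<Omega>1" "open \<Omega>2" "BV \<Omega>2 D2" "diffeo \<Omega>1 \<Omega>2 \<Phi>"
    and "quad_eq_on \<Omega>1 D1 (pullback \<Phi> D2)"
    by (auto simp: diffeo_rel_def is_domain_def)
  then have \<mu>: "\<mu> z = (dzb \<Phi> z + \<mu>' (\<Phi> z) * cnj (dz \<Phi> z)) / (dz \<Phi> z + \<mu>' (\<Phi> z) * cnj (dzb \<Phi> z))"
    and B: "B z = of_real (jac \<Phi> z) * B' (\<Phi> z) / (dz \<Phi> z + \<mu>' (\<Phi> z) * cnj (dzb \<Phi> z))"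
    if "z \<in> \<Omega>1" for z
    using that by (auto simp: quad_eq_on_def pullback_def Let_def D1 D2)
  have \<mu>'_bound: "cmod (\<mu>' w) < 1" if "w \<in> \<Omega>2" for w
    using \<open>BV \<Omega>2 D2\<close> that by (simp add: BV_def D2)
  have "mass_density (\<mu> z) (B z) = jac \<Phi> z * mass_density (\<mu>' (\<Phi> z)) (B' (\<Phi> z))"
    if "z \<in> \<Omega>1" for z
  proof -
    have "0 < jac \<Phi> z" "\<Phi> z \<in> \<Omega>2"
      using \<open>diffeo \<Omega>1 \<Omega>2 \<Phi>\<close> that by (auto simp: diffeo_def bij_betw_def)
    then show ?thesis
      unfolding \<mu>[OF that] B[OF that]
      using mass_density_pullback[of "dz \<Phi> z" "dzb \<Phi> z", folded jac_def] \<mu>'_bound by simp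
  qed
  then have "mass \<Omega>1 D1
      = (\<integral>\<^sup>+z. ennreal (indicator \<Omega>1 z *
            (jac \<Phi> z * mass_density (\<mu>' (\<Phi> z)) (B' (\<Phi> z)))) \<partial>lebesgue)"
    unfolding D1 mass_eq_nn_integral_mass_density by (intro nn_integral_cong) (simp add: indicator_def)
  also have "\<dots> = mass \<Omega>2 D2"
    unfolding D2 mass_eq_nn_integral_mass_density
    using \<open>BV \<Omega>2 D2\<close> \<mu>'_bound
    by (intro nn_integral_diffeo \<open>open \<Omega>1\<close> \<open>open \<Omega>2\<close> \<open>diffeo \<Omega>1 \<Omega>2 \<Phi>\<close>
        continuous_on_mass_density mass_density_nonneg) (auto simp: BV_def D2)
  finally show ?thesis .
qed

theorem theorem9p2:
  assumes "is_domain \<Omega>1" and "BV \<Omega>1 D1"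
    and "is_domain \<Omega>2" and "BV \<Omega>2 D2"
    and "bv_equiv (\<Omega>1, D1) (\<Omega>2, D2)"
  shows "mass \<Omega>1 D1 = mass \<Omega>2 D2"
proof -
  have "case_prod mass X = case_prod mass Y" if "gauge_rel X Y \<or> diffeo_rel X Y" for X Y
    using that by (cases X; cases Y) (auto intro: mass_gauge_rel mass_diffeo_rel)
  with assms(5) have "case_prod mass (\<Omega>1, D1) = case_prod mass (\<Omega>2, D2)"
    unfolding bv_equiv_def by (rule equivclp_invariant)
  then show ?thesis
    by simp
qed

end
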